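(* Let $\Omega \subset \mathbb{R}^d$ be a bounded domain and let $\mu,\nu$ be Borel probability measures on $\Omega$. Then $$W_1(\mu,\nu) = \sup\left\{ \int_\Omega \phi \, \mathrm{d}(\mu - \nu) \;:\; \phi \in C(\Omega),\ \phi(x) - \phi(y) \leq |x-y| \text{ for all } (x,y) \in \operatorname{supp}(\mu) \times \operatorname{supp}(\nu) \right\}.$$
   Context: $C(\Omega)$ denotes the set of bounded continuous real-valued functions on $\Omega$. The 1-Wasserstein distance is $W_1(\mu,\nu) := \min\{ \int_{\Omega\times\Omega} |x-y| \,\mathrm{d}\gamma(x,y) : \gamma \in \Pi(\mu,\nu)\}$, where $\Pi(\mu,\nu)$ is the set of Borel probability measures $\gamma$ on $\Omega\times\Omega$ with $\gamma(A\times\Omega)=\mu(A)$ and $\gamma(\Omega\times A)=\nu(A)$ for all measurable $A\subset\Omega$. $|\cdot|$ is the Euclidean norm. The condition $\phi(x)-\phi(y)\le|x-y|$ on $\operatorname{supp}(\mu)\times\operatorname{supp}(\nu)$ is called the universal admissible condition. *)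

theory Defs
  imports "HOL-Probability.Probability"
begin

definition borel_prob_on :: "'a::topological_space set \<Rightarrow> 'a measure \<Rightarrow> bool" where
  "borel_prob_on \<Omega> M \<longleftrightarrow> prob_space M \<and> space M = \<Omega> \<and>
     sets M = sets (restrict_space borel \<Omega>)"

definition supp :: "'a::topological_space measure \<Rightarrow> 'a set" where
  "supp M = {x \<in> space M. \<forall>U. open U \<longrightarrow> x \<in> U \<longrightarrow> emeasure M (U \<inter> space M) > 0}"

definition couplings :: "'a::topological_space set \<Rightarrow> 'a measure \<Rightarrow> 'a measure \<Rightarrow> ('a \<times> 'a) measure set" where
  "couplings \<Omega> \<mu> \<nu> = {\<gamma>. borel_prob_on (\<Omega> \<times> \<Omega>) \<gamma> \<and>
     (\<forall>A \<in> sets (restrict_space borel \<Omega>).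
        emeasure \<gamma> (A \<times> \<Omega>) = emeasure \<mu> A \<and> emeasure \<gamma> (\<Omega> \<times> A) = emeasure \<nu> A)}"

text \<open>1-Wasserstein distance (the infimum, which the paper writes as a minimum).\<close>
definition W1 :: "'a::euclidean_space set \<Rightarrow> 'a measure \<Rightarrow> 'a measure \<Rightarrow> real" where
  "W1 \<Omega> \<mu> \<nu> = (INF \<gamma>\<in>couplings \<Omega> \<mu> \<nu>. \<integral>p. norm (fst p - snd p) \<partial>\<gamma>)"

definition Cb :: "'a::topological_space set \<Rightarrow> ('a \<Rightarrow> real) set" where
  "Cb \<Omega> = {\<phi>. continuous_on \<Omega> \<phi> \<and> bounded (\<phi> ` \<Omega>)}"

end

theory Submission
  imports Defs
begin

(* Weak duality: a coupling is concentrated on supp mu x supp nu up to a null set, so integrating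
   the admissibility inequality against it bounds every dual value by its cost.
   Strong duality: cut the bounded set Omega into finitely many Borel cells of diameter < eta and
   pass to the transport problem between representative points. There an optimal plan exists by
   compactness; it is cyclically monotone (otherwise moving mass around a cycle of its support
   lowers the cost), so Rockafellar's infimum over chains in its support is a 1-Lipschitz potential
   that is tight on the support, and the discrete cost equals the discrete dual value. Spreading
   the plan over the products of cells gives a coupling of mu and nu, and every discretisation
   error is O(eta). *)

section \<open>Optimal transport between finitely many points\<close>

definition transport_plan :: "'i set \<Rightarrow> ('i \<Rightarrow> real) \<Rightarrow> ('i \<Rightarrow> real) \<Rightarrow> ('i \<times> 'i \<Rightarrow> real) \<Rightarrow> bool"
  where "transport_plan I p q \<pi> \<longleftrightarrow> (\<forall>i\<in>I. \<forall>j\<in>I. 0 \<le> \<pi> (i, j)) \<and>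
    (\<forall>i\<in>I. (\<Sum>j\<in>I. \<pi> (i, j)) = p i) \<and> (\<forall>j\<in>I. (\<Sum>i\<in>I. \<pi> (i, j)) = q j)"

definition transport_cost :: "('i \<times> 'i \<Rightarrow> real) \<Rightarrow> 'i set \<Rightarrow> ('i \<times> 'i \<Rightarrow> real) \<Rightarrow> real"
  where "transport_cost c I \<pi> = (\<Sum>ij\<in>I \<times> I. \<pi> ij * c ij)"

lemma transport_plan_le_marginals:
  assumes "transport_plan I p q \<pi>" "finite I" "i \<in> I" "j \<in> I"
  shows "\<pi> (i, j) \<le> p i" and "\<pi> (i, j) \<le> q j"
proof -
  have "\<pi> (i, j) \<le> (\<Sum>j'\<in>I. \<pi> (i, j'))"
    by (rule member_le_sum) (use assms in \<open>auto simp: transport_plan_def\<close>)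
  then show "\<pi> (i, j) \<le> p i" using assms by (simp add: transport_plan_def)
  have "\<pi> (i, j) \<le> (\<Sum>i'\<in>I. \<pi> (i', j))"
    by (rule member_le_sum) (use assms in \<open>auto simp: transport_plan_def\<close>)
  then show "\<pi> (i, j) \<le> q j" using assms by (simp add: transport_plan_def)
qed

lemma transport_plan_ratio:
  assumes plan: "transport_plan I p q \<pi>" and "finite I"
  shows "\<And>i j. i \<in> I \<Longrightarrow> j \<in> I \<Longrightarrow> \<pi> (i, j) / (p i * q j) * (p i * q j) = \<pi> (i, j)"
    and "\<And>i. i \<in> I \<Longrightarrow> p i \<noteq> 0 \<Longrightarrow> (\<Sum>j\<in>I. \<pi> (i, j) / (p i * q j) * q j) = 1"
    and "\<And>j. j \<in> I \<Longrightarrow> q j \<noteq> 0 \<Longrightarrow> (\<Sum>i\<in>I. \<pi> (i, j) / (p i * q j) * p i) = 1"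
proof -
  have vanish: "\<pi> (i, j) = 0" if "i \<in> I" "j \<in> I" "p i = 0 \<or> q j = 0" for i j
    using transport_plan_le_marginals[OF plan \<open>finite I\<close> that(1,2)] plan that
    by (force simp: transport_plan_def)
  show "\<pi> (i, j) / (p i * q j) * (p i * q j) = \<pi> (i, j)" if "i \<in> I" "j \<in> I" for i j
    using vanish[OF that] by (cases "p i = 0 \<or> q j = 0") auto
  show "(\<Sum>j\<in>I. \<pi> (i, j) / (p i * q j) * q j) = 1" if "i \<in> I" "p i \<noteq> 0" for i
  proof -
    have "(\<Sum>j\<in>I. \<pi> (i, j) / (p i * q j) * q j) = (\<Sum>j\<in>I. \<pi> (i, j)) / p i"
      unfolding sum_divide_distrib using vanish[OF \<open>i \<in> I\<close>] that(2) by (intro sum.cong) auto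
    then show ?thesis using plan that by (simp add: transport_plan_def)
  qed
  show "(\<Sum>i\<in>I. \<pi> (i, j) / (p i * q j) * p i) = 1" if "j \<in> I" "q j \<noteq> 0" for j
  proof -
    have "(\<Sum>i\<in>I. \<pi> (i, j) / (p i * q j) * p i) = (\<Sum>i\<in>I. \<pi> (i, j)) / q j"
      unfolding sum_divide_distrib using vanish[OF _ \<open>j \<in> I\<close>] that(2) by (intro sum.cong) auto
    then show ?thesis using plan that by (simp add: transport_plan_def)
  qed
qed

lemma transport_plan_product:
  assumes "\<And>i. i \<in> I \<Longrightarrow> 0 \<le> p i" "\<And>i. i \<in> I \<Longrightarrow> 0 \<le> q i"
    and "sum p I = 1" "sum q I = 1"
  shows "transport_plan I p q (\<lambda>(i, j). p i * q j)"
  using assms by (simp add: transport_plan_def sum_distrib_left[symmetric] sum_distrib_right[symmetric])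

lemma transport_plan_restrict:
  "transport_plan I p q (restrict \<pi> (I \<times> I)) \<longleftrightarrow> transport_plan I p q \<pi>"
  by (simp add: transport_plan_def)

lemma compactin_transport_plans:
  assumes "finite I" and "sum p I = 1"
  shows "compactin (product_topology (\<lambda>_. euclideanreal) (I \<times> I))
    {\<pi> \<in> extensional (I \<times> I). transport_plan I p q \<pi>}"
proof -
  define T where "T = product_topology (\<lambda>_. euclideanreal) (I \<times> I)"
  define box where "box = PiE (I \<times> I) (\<lambda>ij. {0..p (fst ij)})"
  define rows where "rows = (\<Inter>i\<in>I. {\<pi> \<in> topspace T. (\<Sum>j\<in>I. \<pi> (i, j)) \<in> {p i}})"
  define cols where "cols = (\<Inter>j\<in>I. {\<pi> \<in> topspace T. (\<Sum>i\<in>I. \<pi> (i, j)) \<in> {q j}})"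
  have "I \<noteq> {}" using \<open>sum p I = 1\<close> by auto
  have proj: "continuous_map T euclideanreal (\<lambda>\<pi>. \<pi> ij)" if "ij \<in> I \<times> I" for ij
    unfolding T_def using continuous_map_product_projection[OF that, of "\<lambda>_. euclideanreal"] by simp
  have "compactin T box" unfolding T_def box_def by (simp add: compactin_PiE)
  moreover have "closedin T (rows \<inter> cols)"
    unfolding rows_def cols_def using \<open>I \<noteq> {}\<close> \<open>finite I\<close>
    by (intro closedin_Int closedin_INT closedin_continuous_map_preimage)
       (auto intro!: continuous_map_sum proj)
  ultimately have "compactin T (box \<inter> (rows \<inter> cols))" by (metis closed_Int_compactin inf_commute)
  moreover have "\<pi> \<in> box \<inter> (rows \<inter> cols) \<longleftrightarrow> \<pi> \<in> extensional (I \<times> I) \<and> transport_plan I p q \<pi>" for \<pi>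
    using transport_plan_le_marginals(1)[of I p q \<pi>] \<open>finite I\<close>
    unfolding box_def rows_def cols_def T_def \<open>I \<noteq> {}\<close>
    by (auto simp: PiE_iff transport_plan_def)
  then have "box \<inter> (rows \<inter> cols) = {\<pi> \<in> extensional (I \<times> I). transport_plan I p q \<pi>}" by blast
  ultimately show ?thesis by (simp add: T_def)
qed

lemma optimal_transport_plan_exists:
  assumes "finite I" and "\<And>i. i \<in> I \<Longrightarrow> 0 \<le> p i" "\<And>i. i \<in> I \<Longrightarrow> 0 \<le> q i"
    and "sum p I = 1" "sum q I = 1"
  obtains \<pi> where "transport_plan I p q \<pi>"
    and "\<And>\<pi>'. transport_plan I p q \<pi>' \<Longrightarrow> transport_cost c I \<pi> \<le> transport_cost c I \<pi>'"
proof -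
  let ?T = "product_topology (\<lambda>_. euclideanreal) (I \<times> I)"
  let ?K = "{\<pi> \<in> extensional (I \<times> I). transport_plan I p q \<pi>}"
  have proj: "continuous_map ?T euclideanreal (\<lambda>\<pi>. \<pi> ij)" if "ij \<in> I \<times> I" for ij
    using continuous_map_product_projection[OF that, of "\<lambda>_. euclideanreal"] by simp
  have "continuous_map ?T euclideanreal (transport_cost c I)"
    unfolding transport_cost_def using \<open>finite I\<close>
    by (auto intro!: continuous_map_sum continuous_map_real_mult proj)
  with compactin_transport_plans[OF \<open>finite I\<close> \<open>sum p I = 1\<close>, of q]
  have "compactin euclideanreal (transport_cost c I ` ?K)" by (rule image_compactin)
  then have "compact (transport_cost c I ` ?K)" by simp
  have "restrict (\<lambda>(i, j). p i * q j) (I \<times> I) \<in> ?K"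
    using assms(2-) by (simp add: transport_plan_restrict transport_plan_product)
  then obtain \<pi> where "\<pi> \<in> ?K" and min: "\<And>\<pi>'. \<pi>' \<in> ?K \<Longrightarrow> transport_cost c I \<pi> \<le> transport_cost c I \<pi>'"
    using compact_attains_inf[OF \<open>compact (transport_cost c I ` ?K)\<close>] by blast
  show thesis
  proof
    show "transport_plan I p q \<pi>" using \<open>\<pi> \<in> ?K\<close> by blast
    fix \<pi>' assume "transport_plan I p q \<pi>'"
    then have "restrict \<pi>' (I \<times> I) \<in> ?K" by (simp add: transport_plan_restrict)
    from min[OF this] show "transport_cost c I \<pi> \<le> transport_cost c I \<pi>'"
      by (simp add: transport_cost_def)
  qed
qed

(* cycle_shift w [(x1,y1), ..., (xn,yn)] = [(w,y1), (x1,y2), ..., (x(n-1),yn)]: for w = xn every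
   target is paired with the preceding source, the rearrangement in cyclical monotonicity. *)
fun cycle_shift :: "'i \<Rightarrow> ('i \<times> 'j) list \<Rightarrow> ('i \<times> 'j) list" where
  "cycle_shift w [] = []"
| "cycle_shift w ((x, y) # R) = (w, y) # cycle_shift x R"

lemma map_snd_cycle_shift: "map snd (cycle_shift w R) = map snd R"
  by (induction R arbitrary: w) auto

lemma map_fst_cycle_shift: "R \<noteq> [] \<Longrightarrow> map fst (cycle_shift w R) = w # butlast (map fst R)"
  by (induction R arbitrary: w) auto

lemma count_list_last_Cons_butlast:
  "xs \<noteq> [] \<Longrightarrow> count_list (last xs # butlast xs) y = count_list xs y"
  by (subst (2) append_butlast_last_id[symmetric]) (auto simp del: append_butlast_last_id)

lemma set_cycle_shift_subset:
  assumes "R \<noteq> []" "set R \<subseteq> I \<times> I"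
  shows "set (cycle_shift (fst (last R)) R) \<subseteq> I \<times> I"
proof -
  let ?L = "cycle_shift (fst (last R)) R"
  have "fst (last R) \<in> I" using assms last_in_set by fastforce
  then have "set (map fst ?L) \<subseteq> I" using assms
    by (auto simp: map_fst_cycle_shift dest!: in_set_butlastD)
       (use assms(2) in fastforce)
  moreover have "set (map snd ?L) \<subseteq> I" using assms(2) by (auto simp: map_snd_cycle_shift)
  ultimately show ?thesis by fastforce
qed

lemma count_list_Cons_of_bool: "count_list (x # xs) y = count_list xs y + of_bool (x = y)"
  by simp

lemma count_list_map_fst:
  "set L \<subseteq> I \<times> J \<Longrightarrow> finite J \<Longrightarrow> count_list (map fst L) i = (\<Sum>j\<in>J. count_list L (i, j))"
  by (induction L) (auto simp: count_list_Cons_of_bool sum.distrib simp del: count_list.simps(2))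

lemma count_list_map_snd:
  "set L \<subseteq> I \<times> J \<Longrightarrow> finite I \<Longrightarrow> count_list (map snd L) j = (\<Sum>i\<in>I. count_list L (i, j))"
  by (induction L) (auto simp: count_list_Cons_of_bool sum.distrib simp del: count_list.simps(2))

lemma sum_count_list_weighted:
  "set L \<subseteq> A \<Longrightarrow> finite A \<Longrightarrow> (\<Sum>x\<in>A. real (count_list L x) * c x) = sum_list (map c L)"
  by (induction L) (auto simp: count_list_Cons_of_bool sum.distrib distrib_right simp del: count_list.simps(2))

lemma transport_plan_perturb:
  assumes plan: "transport_plan I p q \<pi>" and "finite I"
    and "R \<noteq> []" and R: "set R \<subseteq> {ij \<in> I \<times> I. 0 < \<pi> ij}" and B: "set B \<subseteq> I \<times> I"
    and fst_eq: "\<And>i. count_list (map fst B) i = count_list (map fst R) i"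
    and snd_eq: "\<And>j. count_list (map snd B) j = count_list (map snd R) j"
  obtains \<delta> where "0 < \<delta>"
    and "transport_plan I p q (\<lambda>ij. \<pi> ij + \<delta> * (real (count_list B ij) - real (count_list R ij)))"
proof
  define \<delta> where "\<delta> = Min (\<pi> ` set R) / length R"
  have RI: "set R \<subseteq> I \<times> I" using R by auto
  have "0 < Min (\<pi> ` set R)" using R \<open>R \<noteq> []\<close> by (subst Min_gr_iff) auto
  then show "0 < \<delta>" using \<open>R \<noteq> []\<close> by (simp add: \<delta>_def)
  have nonneg: "0 \<le> \<pi> ij + \<delta> * (real (count_list B ij) - real (count_list R ij))"
    if "ij \<in> I \<times> I" for ij
  proof (cases "ij \<in> set R")
    case True
    have "\<delta> * real (count_list R ij) \<le> \<delta> * real (length R)"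
      using \<open>0 < \<delta>\<close> count_le_length[of R ij] by simp
    also have "\<dots> = Min (\<pi> ` set R)" using \<open>R \<noteq> []\<close> by (simp add: \<delta>_def)
    also have "\<dots> \<le> \<pi> ij" using True by simp
    moreover have "0 \<le> \<delta> * real (count_list B ij)" using \<open>0 < \<delta>\<close> by simp
    ultimately show ?thesis by (simp add: algebra_simps)
  next
    case False
    then show ?thesis using plan that \<open>0 < \<delta>\<close> by (auto simp: transport_plan_def)
  qed
  have rows: "(\<Sum>j\<in>I. real (count_list B (i, j))) = (\<Sum>j\<in>I. real (count_list R (i, j)))" for i
    using fst_eq[of i] by (simp flip: of_nat_sum add: count_list_map_fst[OF B \<open>finite I\<close>]
        count_list_map_fst[OF RI \<open>finite I\<close>])
  have cols: "(\<Sum>i\<in>I. real (count_list B (i, j))) = (\<Sum>i\<in>I. real (count_list R (i, j)))" for j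
    using snd_eq[of j] by (simp flip: of_nat_sum add: count_list_map_snd[OF B \<open>finite I\<close>]
        count_list_map_snd[OF RI \<open>finite I\<close>])
  show "transport_plan I p q (\<lambda>ij. \<pi> ij + \<delta> * (real (count_list B ij) - real (count_list R ij)))"
    using plan nonneg rows cols
    by (simp add: transport_plan_def sum.distrib sum_subtractf flip: sum_distrib_left)
qed

lemma transport_cost_perturb:
  assumes "finite I" "set R \<subseteq> I \<times> I" "set B \<subseteq> I \<times> I"
  shows "transport_cost c I (\<lambda>ij. \<pi> ij + \<delta> * (real (count_list B ij) - real (count_list R ij)))
    = transport_cost c I \<pi> + \<delta> * (sum_list (map c B) - sum_list (map c R))"
  using assms by (simp add: transport_cost_def sum_count_list_weighted[symmetric] algebra_simps
      sum.distrib sum_subtractf flip: sum_distrib_left)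

definition cyclically_monotone :: "('i \<times> 'i \<Rightarrow> real) \<Rightarrow> ('i \<times> 'i) set \<Rightarrow> bool"
  where "cyclically_monotone c S \<longleftrightarrow> (\<forall>R. R \<noteq> [] \<longrightarrow> set R \<subseteq> S \<longrightarrow>
    sum_list (map c R) \<le> sum_list (map c (cycle_shift (fst (last R)) R)))"

lemma optimal_transport_plan_cyclically_monotone:
  assumes "finite I" and plan: "transport_plan I p q \<pi>"
    and opt: "\<And>\<pi>'. transport_plan I p q \<pi>' \<Longrightarrow> transport_cost c I \<pi> \<le> transport_cost c I \<pi>'"
  shows "cyclically_monotone c {ij \<in> I \<times> I. 0 < \<pi> ij}"
  unfolding cyclically_monotone_def
proof (intro allI impI)
  fix R assume "R \<noteq> []" and R: "set R \<subseteq> {ij \<in> I \<times> I. 0 < \<pi> ij}"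
  define B where "B = cycle_shift (fst (last R)) R"
  have RI: "set R \<subseteq> I \<times> I" using R by auto
  have B: "set B \<subseteq> I \<times> I" unfolding B_def using set_cycle_shift_subset[OF \<open>R \<noteq> []\<close> RI] .
  have "count_list (map fst B) i = count_list (map fst R) i" for i
    using \<open>R \<noteq> []\<close> count_list_last_Cons_butlast[of "map fst R"]
    by (simp add: B_def map_fst_cycle_shift last_map)
  moreover have "count_list (map snd B) j = count_list (map snd R) j" for j
    by (simp add: B_def map_snd_cycle_shift)
  ultimately obtain \<delta> where "0 < \<delta>"
    and "transport_plan I p q (\<lambda>ij. \<pi> ij + \<delta> * (real (count_list B ij) - real (count_list R ij)))"
    using transport_plan_perturb[OF plan \<open>finite I\<close> \<open>R \<noteq> []\<close> R B] by blast
  from opt[OF this(2)] have "0 \<le> \<delta> * (sum_list (map c B) - sum_list (map c R))"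
    by (simp add: transport_cost_perturb[OF \<open>finite I\<close> RI B])
  with \<open>0 < \<delta>\<close> show "sum_list (map c R) \<le> sum_list (map c B)"
    by (simp add: zero_le_mult_iff)
qed

lemma lipschitz_on_one_iff_diff_le:
  fixes f :: "'a::metric_space \<Rightarrow> real"
  shows "1-lipschitz_on X f \<longleftrightarrow> (\<forall>x\<in>X. \<forall>y\<in>X. f x - f y \<le> dist x y)"
proof
  assume "\<forall>x\<in>X. \<forall>y\<in>X. f x - f y \<le> dist x y"
  then have "\<bar>f x - f y\<bar> \<le> dist x y" if "x \<in> X" "y \<in> X" for x y
    using that by (force simp: abs_le_iff dist_commute)
  then show "1-lipschitz_on X f" by (simp add: lipschitz_on_def dist_real_def)
qed (auto simp: lipschitz_on_def dist_real_def abs_le_iff)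

fun chain_potential :: "('i \<Rightarrow> 'a::metric_space) \<Rightarrow> ('i \<times> 'i) list \<Rightarrow> 'a \<Rightarrow> real" where
  "chain_potential a [] z = 0"
| "chain_potential a ((x, y) # R) z = dist z (a y) - dist (a x) (a y) + chain_potential a R (a x)"

lemma chain_potential_cycle_shift:
  "chain_potential a R (a w) = sum_list (map (\<lambda>(i, j). dist (a i) (a j)) (cycle_shift w R))
     - sum_list (map (\<lambda>(i, j). dist (a i) (a j)) R)"
  by (induction R arbitrary: w) auto

lemma chain_potential_le_dist:
  "chain_potential a R z \<le> chain_potential a R z' + dist z z'"
proof (cases R)
  case (Cons xy R')
  then show ?thesis using dist_triangle[of z "a (snd xy)" z'] by (cases xy) (simp add: dist_commute)
qed simp

lemma chain_potential_ge:
  assumes "cyclically_monotone (\<lambda>(i, j). dist (a i) (a j)) S" and "R \<noteq> []" and "set R \<subseteq> S"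
  shows "- dist z (a (fst (last R))) \<le> chain_potential a R z"
proof -
  have "0 \<le> chain_potential a R (a (fst (last R)))"
    using assms by (simp add: cyclically_monotone_def chain_potential_cycle_shift)
  then show ?thesis using chain_potential_le_dist[of a R "a (fst (last R))" z] by (simp add: dist_commute)
qed

lemma cyclically_monotone_potential:
  fixes a :: "'i \<Rightarrow> 'a::metric_space"
  assumes "finite S" and cm: "cyclically_monotone (\<lambda>(i, j). dist (a i) (a j)) S"
  obtains \<phi> where "1-lipschitz_on UNIV \<phi>"
    and "\<And>i j. (i, j) \<in> S \<Longrightarrow> \<phi> (a i) - \<phi> (a j) = dist (a i) (a j)"
proof
  \<comment> \<open>Rockafellar's construction; cyclical monotonicity makes the chain sums bounded below.\<close>
  define V where "V z = {chain_potential a R z | R. set R \<subseteq> S}" for z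
  define \<phi> where "\<phi> z = Inf (V z)" for z
  have V_ne: "V z \<noteq> {}" for z
  proof -
    have "chain_potential a [] z \<in> V z" unfolding V_def by (intro CollectI exI[of _ "[]"]) simp
    then show ?thesis by blast
  qed
  have "- (\<Sum>ij\<in>S. dist z (a (fst ij))) \<le> chain_potential a R z" if "set R \<subseteq> S" for R z
  proof (cases "R = []")
    case False
    have "dist z (a (fst (last R))) \<le> (\<Sum>ij\<in>S. dist z (a (fst ij)))"
      using False that \<open>finite S\<close> by (intro member_le_sum) auto
    with chain_potential_ge[OF cm False that, of z] show ?thesis by simp
  qed (simp add: sum_nonneg)
  then have V_bdd: "bdd_below (V z)" for z unfolding V_def bdd_below_def by blast
  have \<phi>_le: "\<phi> z \<le> chain_potential a R z" if "set R \<subseteq> S" for R z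
    unfolding \<phi>_def V_def using that V_bdd[unfolded V_def] by (intro cInf_lower) auto
  have \<phi>_lip: "\<phi> x - \<phi> y \<le> dist x y" for x y
  proof -
    have "\<phi> x - dist x y \<le> \<phi> y"
      unfolding \<phi>_def[of y]
    proof (rule cInf_greatest[OF V_ne])
      fix v assume "v \<in> V y"
      then obtain R where "set R \<subseteq> S" "v = chain_potential a R y" by (auto simp: V_def)
      then show "\<phi> x - dist x y \<le> v" using \<phi>_le[of R x] chain_potential_le_dist[of a R x y] by simp
    qed
    then show ?thesis by simp
  qed
  then show "1-lipschitz_on UNIV \<phi>" by (simp add: lipschitz_on_one_iff_diff_le)
  fix i j assume "(i, j) \<in> S"
  have "\<phi> (a j) + dist (a i) (a j) \<le> \<phi> (a i)"
    unfolding \<phi>_def[of "a i"]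
  proof (rule cInf_greatest[OF V_ne])
    fix v assume "v \<in> V (a i)"
    then obtain R where "set R \<subseteq> S" "v = chain_potential a R (a i)" by (auto simp: V_def)
    moreover from this \<open>(i, j) \<in> S\<close> have "\<phi> (a j) \<le> chain_potential a ((i, j) # R) (a j)"
      by (intro \<phi>_le) simp
    ultimately show "\<phi> (a j) + dist (a i) (a j) \<le> v" by simp
  qed
  with \<phi>_lip[of "a i" "a j"] show "\<phi> (a i) - \<phi> (a j) = dist (a i) (a j)" by simp
qed

lemma finite_kantorovich_duality:
  fixes a :: "'i \<Rightarrow> 'a::metric_space"
  assumes "finite I" and "\<And>i. i \<in> I \<Longrightarrow> 0 \<le> p i" "\<And>i. i \<in> I \<Longrightarrow> 0 \<le> q i"
    and "sum p I = 1" "sum q I = 1"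
  obtains \<pi> \<phi> where "transport_plan I p q \<pi>" and "1-lipschitz_on UNIV \<phi>"
    and "transport_cost (\<lambda>(i, j). dist (a i) (a j)) I \<pi>
           = (\<Sum>i\<in>I. p i * \<phi> (a i)) - (\<Sum>j\<in>I. q j * \<phi> (a j))"
proof -
  let ?c = "\<lambda>(i, j). dist (a i) (a j)"
  obtain \<pi> where plan: "transport_plan I p q \<pi>"
    and "\<And>\<pi>'. transport_plan I p q \<pi>' \<Longrightarrow> transport_cost ?c I \<pi> \<le> transport_cost ?c I \<pi>'"
    using optimal_transport_plan_exists[OF assms] by blast
  then have "cyclically_monotone ?c {ij \<in> I \<times> I. 0 < \<pi> ij}"
    using optimal_transport_plan_cyclically_monotone[OF \<open>finite I\<close>] by blast
  moreover have "finite {ij \<in> I \<times> I. 0 < \<pi> ij}" using \<open>finite I\<close> by simp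
  ultimately obtain \<phi> where "1-lipschitz_on UNIV \<phi>"
    and tight: "\<And>i j. (i, j) \<in> {ij \<in> I \<times> I. 0 < \<pi> ij} \<Longrightarrow> \<phi> (a i) - \<phi> (a j) = dist (a i) (a j)"
    using cyclically_monotone_potential by blast
  have tight_cost: "\<pi> (i, j) * dist (a i) (a j) = \<pi> (i, j) * (\<phi> (a i) - \<phi> (a j))"
    if "i \<in> I" "j \<in> I" for i j
    using tight[of i j] plan that by (cases "\<pi> (i, j) = 0") (auto simp: transport_plan_def order_less_le)
  have "transport_cost ?c I \<pi> = (\<Sum>i\<in>I. \<Sum>j\<in>I. \<pi> (i, j) * (\<phi> (a i) - \<phi> (a j)))"
    unfolding transport_cost_def sum.cartesian_product by (auto intro!: sum.cong simp: tight_cost)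
  also have "\<dots> = (\<Sum>i\<in>I. \<Sum>j\<in>I. \<pi> (i, j) * \<phi> (a i)) - (\<Sum>i\<in>I. \<Sum>j\<in>I. \<pi> (i, j) * \<phi> (a j))"
    by (simp add: right_diff_distrib sum_subtractf)
  also have "(\<Sum>i\<in>I. \<Sum>j\<in>I. \<pi> (i, j) * \<phi> (a j)) = (\<Sum>j\<in>I. \<Sum>i\<in>I. \<pi> (i, j) * \<phi> (a j))"
    by (rule sum.swap)
  also have "(\<Sum>i\<in>I. \<Sum>j\<in>I. \<pi> (i, j) * \<phi> (a i)) - (\<Sum>j\<in>I. \<Sum>i\<in>I. \<pi> (i, j) * \<phi> (a j))
      = (\<Sum>i\<in>I. p i * \<phi> (a i)) - (\<Sum>j\<in>I. q j * \<phi> (a j))"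
    using plan by (simp add: transport_plan_def flip: sum_distrib_right)
  finally show thesis using that plan \<open>1-lipschitz_on UNIV \<phi>\<close> by blast
qed


section \<open>Couplings and weak duality\<close>

lemma sets_pair_restrict_space_borel:
  fixes A :: "'a::second_countable_topology set" and B :: "'b::second_countable_topology set"
  shows "sets (restrict_space borel A \<Otimes>\<^sub>M restrict_space borel B) = sets (restrict_space borel (A \<times> B))"
proof -
  let ?P = "restrict_space borel A \<Otimes>\<^sub>M restrict_space borel B" and ?R = "restrict_space borel (A \<times> B)"
  have fst_borel: "fst \<in> borel_measurable (borel :: ('a \<times> 'b) measure)"
    using measurable_fst[of "borel :: 'a measure" "borel :: 'b measure"] by (simp add: borel_prod)
  have snd_borel: "snd \<in> borel_measurable (borel :: ('a \<times> 'b) measure)"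
    using measurable_snd[of "borel :: 'a measure" "borel :: 'b measure"] by (simp add: borel_prod)
  have "id \<in> measurable ?P (borel \<Otimes>\<^sub>M borel)"
    unfolding measurable_pair_iff
    by (auto intro!: measurable_restrict_space1 measurable_compose[OF measurable_fst]
        measurable_compose[OF measurable_snd] simp: o_def)
  then have PR: "id \<in> measurable ?P ?R"
    by (intro measurable_restrict_space2) (auto simp: space_pair_measure space_restrict_space borel_prod)
  have RP: "id \<in> measurable ?R ?P"
    unfolding measurable_pair_iff
  proof
    show "fst \<circ> id \<in> measurable ?R (restrict_space borel A)"
      by (rule measurable_restrict_space2)
         (auto simp: space_restrict_space intro!: measurable_restrict_space1 fst_borel)
    show "snd \<circ> id \<in> measurable ?R (restrict_space borel B)"
      by (rule measurable_restrict_space2)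
         (auto simp: space_restrict_space intro!: measurable_restrict_space1 snd_borel)
  qed
  have "space ?P = space ?R" by (simp add: space_pair_measure space_restrict_space)
  then show ?thesis
    using measurable_sets[OF PR] measurable_sets[OF RP] sets.sets_into_space
    by (metis Int_absorb2 id_apply subsetI subset_antisym vimage_id)
qed

lemma null_sets_diff_supp:
  fixes M :: "'a::second_countable_topology measure"
  assumes sets_M: "sets M = sets (restrict_space borel (space M))"
  shows "space M - supp M \<in> null_sets M"
proof -
  obtain \<B> :: "'a set set" where "countable \<B>" and basis: "topological_basis \<B>"
    using ex_countable_basis by blast
  define \<B>\<^sub>0 where "\<B>\<^sub>0 = {b \<in> \<B>. emeasure M (b \<inter> space M) = 0}"
  have open_sets: "U \<inter> space M \<in> sets M" if "open U" for U
    unfolding sets_M sets_restrict_space using that by auto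
  have "space M - supp M = (\<Union>b\<in>\<B>\<^sub>0. b \<inter> space M)"
  proof (intro equalityI subsetI)
    fix x assume "x \<in> space M - supp M"
    then obtain U where U: "open U" "x \<in> U" "emeasure M (U \<inter> space M) = 0" and "x \<in> space M"
      by (auto simp: supp_def)
    then obtain b where b: "b \<in> \<B>" "x \<in> b" "b \<subseteq> U" using topological_basisE[OF basis U(1,2)] by blast
    have "emeasure M (b \<inter> space M) \<le> emeasure M (U \<inter> space M)"
      by (rule emeasure_mono) (use b(3) open_sets U(1) in auto)
    then have "b \<in> \<B>\<^sub>0" using U(3) b(1) by (simp add: \<B>\<^sub>0_def)
    then show "x \<in> (\<Union>b\<in>\<B>\<^sub>0. b \<inter> space M)" using b(2) \<open>x \<in> space M\<close> by blast
  next
    fix x assume "x \<in> (\<Union>b\<in>\<B>\<^sub>0. b \<inter> space M)"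
    then obtain b where "b \<in> \<B>" "emeasure M (b \<inter> space M) = 0" "x \<in> b" "x \<in> space M"
      by (auto simp: \<B>\<^sub>0_def)
    moreover have "open b" using topological_basis_open[OF basis \<open>b \<in> \<B>\<close>] .
    ultimately show "x \<in> space M - supp M" unfolding supp_def by fastforce
  qed
  also have "\<dots> \<in> null_sets M"
  proof (rule null_sets_UN')
    show "countable \<B>\<^sub>0" using \<open>countable \<B>\<close> by (simp add: \<B>\<^sub>0_def)
    show "b \<inter> space M \<in> null_sets M" if "b \<in> \<B>\<^sub>0" for b
      using that topological_basis_open[OF basis] open_sets by (simp add: \<B>\<^sub>0_def null_sets_def)
  qed
  finally show ?thesis .
qed

lemma AE_in_supp:
  fixes M :: "'a::second_countable_topology measure"
  assumes "sets M = sets (restrict_space borel (space M))"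
  shows "AE x in M. x \<in> supp M"
  using null_sets_diff_supp[OF assms] by (rule AE_I') auto

lemma integrable_Cb:
  assumes "borel_prob_on \<Omega> M" and "\<phi> \<in> Cb \<Omega>"
  shows "integrable M \<phi>"
proof -
  interpret prob_space M using assms(1) by (simp add: borel_prob_on_def)
  have sets_M: "sets M = sets (restrict_space borel \<Omega>)" and "space M = \<Omega>"
    using assms(1) by (simp_all add: borel_prob_on_def)
  obtain B where "\<And>x. x \<in> \<Omega> \<Longrightarrow> \<bar>\<phi> x\<bar> \<le> B"
    using assms(2) by (auto simp: Cb_def bounded_iff)
  then have "AE x in M. norm (\<phi> x) \<le> B" using \<open>space M = \<Omega>\<close> by (intro AE_I2) simp
  moreover have "\<phi> \<in> borel_measurable M"
    unfolding measurable_cong_sets[OF sets_M refl]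
    using assms(2) by (simp add: Cb_def borel_measurable_continuous_on_restrict)
  ultimately show ?thesis by (rule integrable_const_bound)
qed

lemma lipschitz_on_Cb:
  fixes \<phi> :: "'a::euclidean_space \<Rightarrow> real"
  assumes "L-lipschitz_on \<Omega> \<phi>" and "bounded \<Omega>"
  shows "\<phi> \<in> Cb \<Omega>"
  using assms by (simp add: Cb_def lipschitz_on_continuous_on bounded_uniformly_continuous_image
      lipschitz_on_uniformly_continuous)

lemma Cb_compose:
  assumes "\<phi> \<in> Cb \<Omega>" and "continuous_on S f" and "f ` S \<subseteq> \<Omega>"
  shows "(\<lambda>x. \<phi> (f x)) \<in> Cb S"
proof -
  have "continuous_on \<Omega> \<phi>" "bounded (\<phi> ` \<Omega>)" using assms(1) by (simp_all add: Cb_def)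
  have "continuous_on S (\<lambda>x. \<phi> (f x))"
    by (rule continuous_on_compose2[OF \<open>continuous_on \<Omega> \<phi>\<close> assms(2,3)])
  moreover have "bounded ((\<lambda>x. \<phi> (f x)) ` S)"
    by (rule bounded_subset[OF \<open>bounded (\<phi> ` \<Omega>)\<close>]) (use assms(3) in auto)
  ultimately show ?thesis by (simp add: Cb_def)
qed
lemma couplings_distr:
  fixes \<Omega> :: "'a::second_countable_topology set"
  assumes "\<gamma> \<in> couplings \<Omega> \<mu> \<nu>" and "borel_prob_on \<Omega> \<mu>" "borel_prob_on \<Omega> \<nu>"
  shows "distr \<gamma> (restrict_space borel \<Omega>) fst = \<mu>" and "distr \<gamma> (restrict_space borel \<Omega>) snd = \<nu>"
proof -
  let ?R = "restrict_space borel \<Omega>"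
  have sets_\<gamma>: "sets \<gamma> = sets (?R \<Otimes>\<^sub>M ?R)" and "space \<gamma> = \<Omega> \<times> \<Omega>"
    using assms(1) by (auto simp: couplings_def borel_prob_on_def sets_pair_restrict_space_borel)
  then have meas: "fst \<in> measurable \<gamma> ?R" "snd \<in> measurable \<gamma> ?R"
    by (simp_all add: measurable_cong_sets[OF sets_\<gamma> refl])
  have sub: "A \<subseteq> \<Omega>" if "A \<in> sets ?R" for A
    using sets.sets_into_space[OF that] by (simp add: space_restrict_space)
  show "distr \<gamma> ?R fst = \<mu>"
  proof (rule measure_eqI)
    fix A assume "A \<in> sets (distr \<gamma> ?R fst)"
    then have A: "A \<in> sets ?R" by simp
    moreover have "fst -` A \<inter> space \<gamma> = A \<times> \<Omega>" using sub[OF A] \<open>space \<gamma> = \<Omega> \<times> \<Omega>\<close> by auto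
    ultimately show "emeasure (distr \<gamma> ?R fst) A = emeasure \<mu> A"
      using assms(1) by (simp add: emeasure_distr[OF meas(1)] couplings_def)
  qed (use assms(2) in \<open>simp add: borel_prob_on_def\<close>)
  show "distr \<gamma> ?R snd = \<nu>"
  proof (rule measure_eqI)
    fix A assume "A \<in> sets (distr \<gamma> ?R snd)"
    then have A: "A \<in> sets ?R" by simp
    moreover have "snd -` A \<inter> space \<gamma> = \<Omega> \<times> A" using sub[OF A] \<open>space \<gamma> = \<Omega> \<times> \<Omega>\<close> by auto
    ultimately show "emeasure (distr \<gamma> ?R snd) A = emeasure \<nu> A"
      using assms(1) by (simp add: emeasure_distr[OF meas(2)] couplings_def)
  qed (use assms(3) in \<open>simp add: borel_prob_on_def\<close>)
qed


lemma integrable_coupling_cost: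
  fixes \<Omega> :: "'a::euclidean_space set"
  assumes "bounded \<Omega>" and "\<gamma> \<in> couplings \<Omega> \<mu> \<nu>"
  shows "integrable \<gamma> (\<lambda>p. norm (fst p - snd p))"
proof -
  obtain D where D: "\<And>x. x \<in> \<Omega> \<Longrightarrow> norm x \<le> D" using \<open>bounded \<Omega>\<close> by (auto simp: bounded_iff)
  have bound: "\<bar>norm (fst p - snd p)\<bar> \<le> 2 * D" if "p \<in> \<Omega> \<times> \<Omega>" for p
  proof -
    have "norm (fst p) \<le> D" "norm (snd p) \<le> D" using that D by (auto simp: mem_Times_iff)
    then show ?thesis using norm_triangle_ineq4[of "fst p" "snd p"] by simp
  qed
  have "continuous_on (\<Omega> \<times> \<Omega>) (\<lambda>p. norm (fst p - snd p))" by (intro continuous_intros)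
  with bound have "(\<lambda>p. norm (fst p - snd p)) \<in> Cb (\<Omega> \<times> \<Omega>)"
    unfolding Cb_def bounded_iff by fastforce
  then show ?thesis by (rule integrable_Cb[rotated]) (use assms(2) in \<open>simp add: couplings_def\<close>)
qed

lemma dual_value_le_transport_cost:
  fixes \<Omega> :: "'a::euclidean_space set"
  assumes "bounded \<Omega>" and \<mu>: "borel_prob_on \<Omega> \<mu>" and \<nu>: "borel_prob_on \<Omega> \<nu>"
    and \<gamma>: "\<gamma> \<in> couplings \<Omega> \<mu> \<nu>" and "\<phi> \<in> Cb \<Omega>"
    and admissible: "\<forall>x\<in>supp \<mu>. \<forall>y\<in>supp \<nu>. \<phi> x - \<phi> y \<le> norm (x - y)"
  shows "(\<integral>x. \<phi> x \<partial>\<mu>) - (\<integral>x. \<phi> x \<partial>\<nu>) \<le> (\<integral>p. norm (fst p - snd p) \<partial>\<gamma>)"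
proof -
  let ?R = "restrict_space borel \<Omega>"
  have \<gamma>_prob: "borel_prob_on (\<Omega> \<times> \<Omega>) \<gamma>" using \<gamma> by (simp add: couplings_def)
  then have sets_\<gamma>: "sets \<gamma> = sets (?R \<Otimes>\<^sub>M ?R)"
    by (simp add: borel_prob_on_def sets_pair_restrict_space_borel)
  have meas: "fst \<in> measurable \<gamma> ?R" "snd \<in> measurable \<gamma> ?R"
    by (simp_all add: measurable_cong_sets[OF sets_\<gamma> refl])
  have \<phi>_meas: "\<phi> \<in> borel_measurable ?R"
    using \<open>\<phi> \<in> Cb \<Omega>\<close> by (simp add: Cb_def borel_measurable_continuous_on_restrict)
  have "(\<lambda>p. \<phi> (fst p)) \<in> Cb (\<Omega> \<times> \<Omega>)" "(\<lambda>p. \<phi> (snd p)) \<in> Cb (\<Omega> \<times> \<Omega>)"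
    by (rule Cb_compose[OF \<open>\<phi> \<in> Cb \<Omega>\<close>], (rule continuous_on_fst continuous_on_snd continuous_on_id)+, force)+
  then have int_fst: "integrable \<gamma> (\<lambda>p. \<phi> (fst p))" and int_snd: "integrable \<gamma> (\<lambda>p. \<phi> (snd p))"
    using integrable_Cb[OF \<gamma>_prob] by blast+
  have int_cost: "integrable \<gamma> (\<lambda>p. norm (fst p - snd p))"
    using integrable_coupling_cost[OF \<open>bounded \<Omega>\<close> \<gamma>] .
  have "AE x in distr \<gamma> ?R fst. x \<in> supp \<mu>"
    unfolding couplings_distr(1)[OF \<gamma> \<mu> \<nu>]
    using \<mu> by (intro AE_in_supp) (simp add: borel_prob_on_def)
  then have "AE p in \<gamma>. fst p \<in> supp \<mu>" by (rule AE_distrD[OF meas(1)])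
  moreover have "AE x in distr \<gamma> ?R snd. x \<in> supp \<nu>"
    unfolding couplings_distr(2)[OF \<gamma> \<mu> \<nu>]
    using \<nu> by (intro AE_in_supp) (simp add: borel_prob_on_def)
  then have "AE p in \<gamma>. snd p \<in> supp \<nu>" by (rule AE_distrD[OF meas(2)])
  ultimately have "AE p in \<gamma>. \<phi> (fst p) - \<phi> (snd p) \<le> norm (fst p - snd p)"
    using admissible by auto
  then have "(\<integral>p. \<phi> (fst p) - \<phi> (snd p) \<partial>\<gamma>) \<le> (\<integral>p. norm (fst p - snd p) \<partial>\<gamma>)"
    by (intro integral_mono_AE int_cost Bochner_Integration.integrable_diff int_fst int_snd)
  moreover have "(\<integral>x. \<phi> x \<partial>\<mu>) = (\<integral>p. \<phi> (fst p) \<partial>\<gamma>)" "(\<integral>x. \<phi> x \<partial>\<nu>) = (\<integral>p. \<phi> (snd p) \<partial>\<gamma>)"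
    using integral_distr[OF meas(1) \<phi>_meas] integral_distr[OF meas(2) \<phi>_meas]
      couplings_distr[OF \<gamma> \<mu> \<nu>] by simp_all
  ultimately show ?thesis using int_fst int_snd by simp
qed


section \<open>Discretisation\<close>

definition grid_cell :: "real \<Rightarrow> 'a::euclidean_space \<Rightarrow> ('a \<Rightarrow> int)"
  where "grid_cell h x = restrict (\<lambda>b. \<lfloor>x \<bullet> b / h\<rfloor>) Basis"

lemma sets_grid_cell: "{x. grid_cell h x = k} \<in> sets borel"
proof (cases "k \<in> extensional Basis")
  case True
  then have "{x. grid_cell h x = k} = {x. \<forall>b\<in>Basis. \<lfloor>x \<bullet> b / h\<rfloor> = k b}"
    by (auto simp: grid_cell_def fun_eq_iff extensional_def)
  also have "\<dots> \<in> sets borel" by measurable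
  finally show ?thesis .
next
  case False
  then have "{x. grid_cell h x = k} = {}" by (auto simp: grid_cell_def)
  then show ?thesis by simp
qed

lemma dist_lt_if_grid_cell_eq:
  fixes x y :: "'a::euclidean_space" and h :: real
  assumes "0 < h" and "grid_cell h x = grid_cell h y"
  shows "dist x y < DIM('a) * h"
proof -
  have "\<bar>(x - y) \<bullet> b\<bar> < h" if b: "b \<in> Basis" for b
  proof -
    have "\<lfloor>x \<bullet> b / h\<rfloor> = \<lfloor>y \<bullet> b / h\<rfloor>"
      using fun_cong[OF assms(2), of b] b by (simp add: grid_cell_def)
    then have "\<bar>x \<bullet> b / h - y \<bullet> b / h\<bar> < 1" by linarith
    then show ?thesis using \<open>0 < h\<close> by (simp add: inner_diff_left abs_less_iff field_simps)
  qed
  then have "(\<Sum>b\<in>Basis. \<bar>(x - y) \<bullet> b\<bar>) < (\<Sum>b\<in>(Basis :: 'a set). h)"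
    by (intro sum_strict_mono) auto
  then show ?thesis using norm_le_l1[of "x - y"] by (simp add: dist_norm)
qed

lemma finite_grid_cell_image:
  fixes \<Omega> :: "'a::euclidean_space set"
  assumes "bounded \<Omega>" and "0 < h"
  shows "finite (grid_cell h ` \<Omega>)"
proof -
  obtain D where D: "\<And>x. x \<in> \<Omega> \<Longrightarrow> norm x \<le> D" using \<open>bounded \<Omega>\<close> by (auto simp: bounded_iff)
  define N where "N = \<lceil>D / h\<rceil>"
  have "\<lfloor>x \<bullet> b / h\<rfloor> \<in> {-N..N}" if "x \<in> \<Omega>" "b \<in> Basis" for x b
  proof -
    have "\<bar>x \<bullet> b\<bar> \<le> D" using Basis_le_norm[OF that(2), of x] D[OF that(1)] by linarith
    then have "\<bar>x \<bullet> b / h\<bar> \<le> D / h" using \<open>0 < h\<close> by (simp add: divide_right_mono)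
    moreover have "D / h \<le> of_int N" by (simp add: N_def)
    ultimately have "- of_int N \<le> x \<bullet> b / h" "x \<bullet> b / h \<le> of_int N" by linarith+
    then show ?thesis by (simp add: le_floor_iff floor_le_iff)
  qed
  then have "grid_cell h ` \<Omega> \<subseteq> PiE Basis (\<lambda>_. {-N..N})" by (auto simp: grid_cell_def)
  then show ?thesis by (rule finite_subset) (auto intro!: finite_PiE)
qed

lemma bounded_partition_small_cells:
  fixes \<Omega> :: "'a::euclidean_space set"
  assumes "bounded \<Omega>" and "0 < \<eta>"
  obtains I :: "('a \<Rightarrow> int) set" and A :: "('a \<Rightarrow> int) \<Rightarrow> 'a set"
  where "finite I" and "disjoint_family_on A I" and "(\<Union>i\<in>I. A i) = \<Omega>"
    and "\<And>i. i \<in> I \<Longrightarrow> A i \<noteq> {}" and "\<And>i. A i \<in> sets (restrict_space borel \<Omega>)"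
    and "\<And>i x y. x \<in> A i \<Longrightarrow> y \<in> A i \<Longrightarrow> dist x y < \<eta>"
proof
  define h where "h = \<eta> / DIM('a)"
  have "0 < h" using \<open>0 < \<eta>\<close> by (simp add: h_def)
  define A where "A k = \<Omega> \<inter> {x. grid_cell h x = k}" for k
  show "finite (grid_cell h ` \<Omega>)" using finite_grid_cell_image[OF \<open>bounded \<Omega>\<close> \<open>0 < h\<close>] .
  show "disjoint_family_on A (grid_cell h ` \<Omega>)" "(\<Union>k\<in>grid_cell h ` \<Omega>. A k) = \<Omega>"
    "\<And>k. k \<in> grid_cell h ` \<Omega> \<Longrightarrow> A k \<noteq> {}"
    by (auto simp: A_def disjoint_family_on_def)
  show "A k \<in> sets (restrict_space borel \<Omega>)" for k
    using sets_grid_cell[of h k] by (auto simp: A_def sets_restrict_space)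
  show "dist x y < \<eta>" if "x \<in> A k" "y \<in> A k" for k x y
    using dist_lt_if_grid_cell_eq[OF \<open>0 < h\<close>, of x y] that by (simp add: A_def h_def)
qed

lemma integral_ge_partition_sum:
  fixes f :: "'b \<Rightarrow> real"
  assumes "finite_measure M" and "finite I" and A: "\<And>i. i \<in> I \<Longrightarrow> A i \<in> sets M"
    and disj: "disjoint_family_on A I" and cover: "(\<Union>i\<in>I. A i) = space M"
    and "integrable M f" and lower: "\<And>i x. i \<in> I \<Longrightarrow> x \<in> A i \<Longrightarrow> L i \<le> f x"
  shows "(\<Sum>i\<in>I. measure M (A i) * L i) \<le> (\<integral>x. f x \<partial>M)"
proof -
  define g where "g x = (\<Sum>i\<in>I. L i * indicator (A i) x)" for x
  have int: "integrable M (\<lambda>x. L i * indicator (A i) x)" if "i \<in> I" for i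
    using A[OF that] finite_measure.emeasure_finite[OF assms(1)] by (simp add: less_top)
  have "(\<Sum>i\<in>I. measure M (A i) * L i) = (\<integral>x. g x \<partial>M)"
    unfolding g_def using int A by (simp add: Bochner_Integration.integral_sum mult.commute)
  also have "\<dots> \<le> (\<integral>x. f x \<partial>M)"
  proof (rule integral_mono)
    show "integrable M g" unfolding g_def using int by simp
    fix x assume "x \<in> space M"
    then obtain i where i: "i \<in> I" "x \<in> A i" using cover by auto
    have "g x = (\<Sum>j\<in>I. if j = i then L i else 0)"
      unfolding g_def using disj i
      by (intro sum.cong) (auto simp: disjoint_family_on_def split: split_indicator)
    then show "g x \<le> f x" using lower[OF i] i \<open>finite I\<close> by simp
  qed (fact)
  finally show ?thesis .
qed

lemma integral_le_partition_sum:
  fixes f :: "'b \<Rightarrow> real"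
  assumes "finite_measure M" and "finite I" and "\<And>i. i \<in> I \<Longrightarrow> A i \<in> sets M"
    and "disjoint_family_on A I" and "(\<Union>i\<in>I. A i) = space M"
    and "integrable M f" and "\<And>i x. i \<in> I \<Longrightarrow> x \<in> A i \<Longrightarrow> f x \<le> U i"
  shows "(\<integral>x. f x \<partial>M) \<le> (\<Sum>i\<in>I. measure M (A i) * U i)"
  using integral_ge_partition_sum[where L = "\<lambda>i. - U i" and f = "\<lambda>x. - f x"] assms
  by (simp add: sum_negf)

lemma measure_partition_weighted_sum:
  assumes "finite_measure M" and "finite I" and A: "\<And>i. i \<in> I \<Longrightarrow> A i \<in> sets M"
    and "disjoint_family_on A I" and cover: "(\<Union>i\<in>I. A i) = space M" and "X \<in> sets M"
    and weight: "\<And>i. i \<in> I \<Longrightarrow> measure M (A i) \<noteq> 0 \<Longrightarrow> w i = 1"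
  shows "(\<Sum>i\<in>I. measure M (X \<inter> A i) * w i) = measure M X"
proof -
  interpret finite_measure M by fact
  have unweight: "measure M (X \<inter> A i) * w i = measure M (X \<inter> A i)" if "i \<in> I" for i
  proof (cases "measure M (A i) = 0")
    case True
    have "measure M (X \<inter> A i) \<le> measure M (A i)" using A[OF that] by (intro finite_measure_mono) auto
    then show ?thesis using True by (simp add: measure_le_0_iff)
  qed (simp add: weight that)
  have "(\<Sum>i\<in>I. measure M (X \<inter> A i) * w i) = (\<Sum>i\<in>I. measure M (X \<inter> A i))"
    using unweight by (rule sum.cong[OF refl])
  also have "\<dots> = measure M (\<Union>i\<in>I. X \<inter> A i)"
    using \<open>finite I\<close> A \<open>X \<in> sets M\<close> \<open>disjoint_family_on A I\<close>
    by (intro finite_measure_finite_Union[symmetric]) (auto simp: disjoint_family_on_def)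
  also have "(\<Union>i\<in>I. X \<inter> A i) = X" using cover sets.sets_into_space[OF \<open>X \<in> sets M\<close>] by auto
  finally show ?thesis .
qed

lemma prob_space_partition_sum:
  assumes "prob_space M" and "finite I" and "\<And>i. i \<in> I \<Longrightarrow> A i \<in> sets M"
    and "disjoint_family_on A I" and "(\<Union>i\<in>I. A i) = space M"
  shows "(\<Sum>i\<in>I. measure M (A i)) = 1"
proof -
  interpret prob_space M by fact
  show ?thesis
    using measure_partition_weighted_sum[of M I A "space M" "\<lambda>_. 1"] assms(2-5) sets.Int_space_eq1
    by (simp add: prob_space)
qed

lemma integral_lipschitz_partition_approx:
  assumes "prob_space M" and "finite I" and A: "\<And>i. i \<in> I \<Longrightarrow> A i \<in> sets M"
    and "disjoint_family_on A I" and "(\<Union>i\<in>I. A i) = space M"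
    and "1-lipschitz_on UNIV \<phi>" and "integrable M \<phi>"
    and close: "\<And>i x. i \<in> I \<Longrightarrow> x \<in> A i \<Longrightarrow> dist x (a i) \<le> \<eta>"
  shows "\<bar>(\<integral>x. \<phi> x \<partial>M) - (\<Sum>i\<in>I. measure M (A i) * \<phi> (a i))\<bar> \<le> \<eta>"
proof -
  interpret prob_space M by fact
  have "(\<Sum>i\<in>I. measure M (A i)) = 1" using assms(1-5) by (rule prob_space_partition_sum)
  then have sum_shift: "(\<Sum>i\<in>I. measure M (A i) * (\<phi> (a i) + t)) = (\<Sum>i\<in>I. measure M (A i) * \<phi> (a i)) + t"
    for t by (simp add: distrib_left sum.distrib flip: sum_distrib_right)
  have "\<bar>\<phi> x - \<phi> (a i)\<bar> \<le> \<eta>" if "i \<in> I" "x \<in> A i" for i x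
    using lipschitz_onD[OF assms(6), of x "a i"] close[OF that] by (simp add: dist_real_def)
  then have "(\<Sum>i\<in>I. measure M (A i) * (\<phi> (a i) + - \<eta>)) \<le> (\<integral>x. \<phi> x \<partial>M)"
    and "(\<integral>x. \<phi> x \<partial>M) \<le> (\<Sum>i\<in>I. measure M (A i) * (\<phi> (a i) + \<eta>))"
    by (intro integral_ge_partition_sum integral_le_partition_sum finite_measure_axioms assms;
        force simp: abs_le_iff)+
  then show ?thesis unfolding sum_shift by linarith
qed

lemma emeasure_density_sum_indicator_Times:
  fixes c :: "'k \<Rightarrow> real"
  assumes "finite_measure M" "finite_measure N" and "finite K"
    and A: "\<And>k. k \<in> K \<Longrightarrow> A k \<in> sets M" and B: "\<And>k. k \<in> K \<Longrightarrow> B k \<in> sets N"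
    and c: "\<And>k. k \<in> K \<Longrightarrow> 0 \<le> c k" and X: "X \<in> sets M" and Y: "Y \<in> sets N"
  shows "emeasure (density (M \<Otimes>\<^sub>M N) (\<lambda>z. \<Sum>k\<in>K. c k * indicator (A k \<times> B k) z)) (X \<times> Y)
    = (\<Sum>k\<in>K. c k * measure M (X \<inter> A k) * measure N (Y \<inter> B k))"
proof -
  interpret M: finite_measure M by fact
  interpret N: finite_measure N by fact
  interpret pair_sigma_finite M N ..
  have rect: "(X \<inter> A k) \<times> (Y \<inter> B k) \<in> sets (M \<Otimes>\<^sub>M N)" if "k \<in> K" for k
    using A[OF that] B[OF that] X Y by auto
  have "(\<lambda>z. ennreal (\<Sum>k\<in>K. c k * indicator (A k \<times> B k) z)) \<in> borel_measurable (M \<Otimes>\<^sub>M N)"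
    using A B by (auto intro!: measurable_compose[OF _ measurable_ennreal] borel_measurable_sum
        borel_measurable_times borel_measurable_indicator)
  then have "emeasure (density (M \<Otimes>\<^sub>M N) (\<lambda>z. \<Sum>k\<in>K. c k * indicator (A k \<times> B k) z)) (X \<times> Y)
      = (\<integral>\<^sup>+z. ennreal (\<Sum>k\<in>K. c k * indicator (A k \<times> B k) z) * indicator (X \<times> Y) z \<partial>(M \<Otimes>\<^sub>M N))"
    using X Y by (simp add: emeasure_density)
  also have "\<dots> = (\<integral>\<^sup>+z. (\<Sum>k\<in>K. ennreal (c k) * indicator ((X \<inter> A k) \<times> (Y \<inter> B k)) z) \<partial>(M \<Otimes>\<^sub>M N))"
  proof (rule nn_integral_cong)
    fix z
    have "ennreal (\<Sum>k\<in>K. c k * indicator (A k \<times> B k) z) * indicator (X \<times> Y) z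
        = (\<Sum>k\<in>K. ennreal (c k * indicator (A k \<times> B k) z) * indicator (X \<times> Y) z)"
      using c by (simp add: sum_distrib_right flip: sum_ennreal)
    also have "\<dots> = (\<Sum>k\<in>K. ennreal (c k) * indicator ((X \<inter> A k) \<times> (Y \<inter> B k)) z)"
      by (intro sum.cong) (auto split: split_indicator)
    finally show "ennreal (\<Sum>k\<in>K. c k * indicator (A k \<times> B k) z) * indicator (X \<times> Y) z
        = (\<Sum>k\<in>K. ennreal (c k) * indicator ((X \<inter> A k) \<times> (Y \<inter> B k)) z)" .
  qed
  also have "\<dots> = (\<Sum>k\<in>K. ennreal (c k) * emeasure (M \<Otimes>\<^sub>M N) ((X \<inter> A k) \<times> (Y \<inter> B k)))"
    using rect by (simp add: nn_integral_sum nn_integral_cmult_indicator)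
  also have "\<dots> = ennreal (\<Sum>k\<in>K. c k * measure M (X \<inter> A k) * measure N (Y \<inter> B k))"
    using A B X Y c
    by (auto simp: N.emeasure_pair_measure_Times M.emeasure_eq_measure N.emeasure_eq_measure
        ennreal_mult' mult.assoc intro!: sum.cong simp flip: sum_ennreal)
  finally show ?thesis .
qed


lemma density_step_coupling:
  fixes \<Omega> :: "'a::second_countable_topology set"
  assumes \<mu>: "borel_prob_on \<Omega> \<mu>" and \<nu>: "borel_prob_on \<Omega> \<nu>" and "finite I"
    and A: "\<And>i. i \<in> I \<Longrightarrow> A i \<in> sets (restrict_space borel \<Omega>)"
    and disj: "disjoint_family_on A I" and cover: "(\<Union>i\<in>I. A i) = \<Omega>"
    and c: "\<And>ij. ij \<in> I \<times> I \<Longrightarrow> 0 \<le> c ij"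
    and row: "\<And>i. i \<in> I \<Longrightarrow> measure \<mu> (A i) \<noteq> 0 \<Longrightarrow> (\<Sum>j\<in>I. c (i, j) * measure \<nu> (A j)) = 1"
    and col: "\<And>j. j \<in> I \<Longrightarrow> measure \<nu> (A j) \<noteq> 0 \<Longrightarrow> (\<Sum>i\<in>I. c (i, j) * measure \<mu> (A i)) = 1"
  shows "density (\<mu> \<Otimes>\<^sub>M \<nu>) (\<lambda>z. \<Sum>ij\<in>I \<times> I. c ij * indicator (A (fst ij) \<times> A (snd ij)) z)
    \<in> couplings \<Omega> \<mu> \<nu>" (is "?\<gamma> \<in> _")
proof -
  let ?R = "restrict_space borel \<Omega>"
  interpret \<mu>: prob_space \<mu> using \<mu> by (simp add: borel_prob_on_def)
  interpret \<nu>: prob_space \<nu> using \<nu> by (simp add: borel_prob_on_def)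
  have sets_\<mu>: "sets \<mu> = sets ?R" and sets_\<nu>: "sets \<nu> = sets ?R" and "space \<mu> = \<Omega>" "space \<nu> = \<Omega>"
    using \<mu> \<nu> by (simp_all add: borel_prob_on_def)
  have rect: "emeasure ?\<gamma> (X \<times> Y)
      = (\<Sum>i\<in>I. \<Sum>j\<in>I. c (i, j) * measure \<mu> (X \<inter> A i) * measure \<nu> (Y \<inter> A j))"
    if "X \<in> sets ?R" "Y \<in> sets ?R" for X Y
    using that A c sets_\<mu> sets_\<nu> \<open>finite I\<close>
    by (subst emeasure_density_sum_indicator_Times) (auto simp: sum.cartesian_product split_beta)
  have A_sub: "A i \<subseteq> \<Omega>" if "i \<in> I" for i using cover that by auto
  have \<Omega>_sets: "\<Omega> \<in> sets ?R" using sets.top[of ?R] by (simp add: space_restrict_space)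
  have marginal_fst: "emeasure ?\<gamma> (X \<times> \<Omega>) = emeasure \<mu> X" if X: "X \<in> sets ?R" for X
  proof -
    have "(\<Sum>i\<in>I. \<Sum>j\<in>I. c (i, j) * measure \<mu> (X \<inter> A i) * measure \<nu> (\<Omega> \<inter> A j))
        = (\<Sum>i\<in>I. measure \<mu> (X \<inter> A i) * (\<Sum>j\<in>I. c (i, j) * measure \<nu> (A j)))"
      using A_sub by (auto simp: sum_distrib_left mult_ac Int_absorb1 intro!: sum.cong)
    also have "\<dots> = measure \<mu> X"
      using X sets_\<mu> A row \<open>finite I\<close> disj cover \<open>space \<mu> = \<Omega>\<close>
      by (intro measure_partition_weighted_sum) auto
    finally show ?thesis by (simp add: rect[OF X \<Omega>_sets] \<mu>.emeasure_eq_measure)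
  qed
  have marginal_snd: "emeasure ?\<gamma> (\<Omega> \<times> Y) = emeasure \<nu> Y" if Y: "Y \<in> sets ?R" for Y
  proof -
    have "(\<Sum>i\<in>I. \<Sum>j\<in>I. c (i, j) * measure \<mu> (\<Omega> \<inter> A i) * measure \<nu> (Y \<inter> A j))
        = (\<Sum>j\<in>I. measure \<nu> (Y \<inter> A j) * (\<Sum>i\<in>I. c (i, j) * measure \<mu> (A i)))"
      using A_sub by (subst sum.swap) (auto simp: sum_distrib_left mult_ac Int_absorb1 intro!: sum.cong)
    also have "\<dots> = measure \<nu> Y"
      using Y sets_\<nu> A col \<open>finite I\<close> disj cover \<open>space \<nu> = \<Omega>\<close>
      by (intro measure_partition_weighted_sum) auto
    finally show ?thesis by (simp add: rect[OF \<Omega>_sets Y] \<nu>.emeasure_eq_measure)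
  qed
  have "sets ?\<gamma> = sets (restrict_space borel (\<Omega> \<times> \<Omega>))"
    by (simp add: sets_pair_measure_cong[OF sets_\<mu> sets_\<nu>] sets_pair_restrict_space_borel)
  moreover have "space ?\<gamma> = \<Omega> \<times> \<Omega>" by (simp add: space_pair_measure \<open>space \<mu> = \<Omega>\<close> \<open>space \<nu> = \<Omega>\<close>)
  moreover have "prob_space ?\<gamma>"
    using marginal_fst[OF \<Omega>_sets] \<mu>.emeasure_space_1 \<open>space \<mu> = \<Omega>\<close> \<open>space ?\<gamma> = \<Omega> \<times> \<Omega>\<close>
    by (intro prob_spaceI) simp
  ultimately show ?thesis using marginal_fst marginal_snd by (simp add: couplings_def borel_prob_on_def)
qed

lemma transport_plan_coupling:
  fixes \<Omega> :: "'a::second_countable_topology set"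
  assumes \<mu>: "borel_prob_on \<Omega> \<mu>" and \<nu>: "borel_prob_on \<Omega> \<nu>" and "finite I"
    and A: "\<And>i. i \<in> I \<Longrightarrow> A i \<in> sets (restrict_space borel \<Omega>)"
    and disj: "disjoint_family_on A I" and cover: "(\<Union>i\<in>I. A i) = \<Omega>"
    and plan: "transport_plan I (\<lambda>i. measure \<mu> (A i)) (\<lambda>i. measure \<nu> (A i)) \<pi>"
  obtains \<gamma> where "\<gamma> \<in> couplings \<Omega> \<mu> \<nu>"
    and "\<And>i j. i \<in> I \<Longrightarrow> j \<in> I \<Longrightarrow> measure \<gamma> (A i \<times> A j) = \<pi> (i, j)"
proof
  \<comment> \<open>Division by zero only occurs on cells where the plan vanishes anyway.\<close>
  define c where "c ij = \<pi> ij / (measure \<mu> (A (fst ij)) * measure \<nu> (A (snd ij)))" for ij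
  define \<gamma> where "\<gamma> = density (\<mu> \<Otimes>\<^sub>M \<nu>) (\<lambda>z. \<Sum>ij\<in>I \<times> I. c ij * indicator (A (fst ij) \<times> A (snd ij)) z)"
  interpret \<mu>: prob_space \<mu> using \<mu> by (simp add: borel_prob_on_def)
  interpret \<nu>: prob_space \<nu> using \<nu> by (simp add: borel_prob_on_def)
  have "0 \<le> c ij" if "ij \<in> I \<times> I" for ij
    using plan that by (auto simp: c_def transport_plan_def)
  then show \<gamma>: "\<gamma> \<in> couplings \<Omega> \<mu> \<nu>"
    unfolding \<gamma>_def using \<mu> \<nu> \<open>finite I\<close> A disj cover
      transport_plan_ratio(2,3)[OF plan \<open>finite I\<close>]
    by (intro density_step_coupling) (auto simp: c_def)
  then interpret \<gamma>: prob_space \<gamma> by (simp add: couplings_def borel_prob_on_def)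
  fix i j assume "i \<in> I" "j \<in> I"
  have cross: "measure \<mu> (A i \<inter> A k) = (if k = i then measure \<mu> (A i) else 0)"
    "measure \<nu> (A j \<inter> A l) = (if l = j then measure \<nu> (A j) else 0)" if "k \<in> I" "l \<in> I" for k l
    using disj \<open>i \<in> I\<close> \<open>j \<in> I\<close> that by (auto simp: disjoint_family_on_def)
  have "emeasure \<gamma> (A i \<times> A j) = (\<Sum>kl\<in>I \<times> I. c kl * measure \<mu> (A i \<inter> A (fst kl)) * measure \<nu> (A j \<inter> A (snd kl)))"
    unfolding \<gamma>_def using A \<open>i \<in> I\<close> \<open>j \<in> I\<close> plan \<open>finite I\<close> \<mu> \<nu>
    by (intro emeasure_density_sum_indicator_Times)
       (auto simp: c_def transport_plan_def borel_prob_on_def)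
  also have "\<dots> = (\<Sum>kl\<in>I \<times> I. if kl = (i, j) then c (i, j) * (measure \<mu> (A i) * measure \<nu> (A j)) else 0)"
    by (intro arg_cong[where f = ennreal] sum.cong) (auto simp: cross split: if_splits)
  also have "\<dots> = ennreal (\<pi> (i, j))"
    using \<open>i \<in> I\<close> \<open>j \<in> I\<close> \<open>finite I\<close> transport_plan_ratio(1)[OF plan \<open>finite I\<close>] by (simp add: c_def)
  finally show "measure \<gamma> (A i \<times> A j) = \<pi> (i, j)"
    using plan \<open>i \<in> I\<close> \<open>j \<in> I\<close> by (simp add: \<gamma>.emeasure_eq_measure transport_plan_def)
qed

lemma coupling_cost_le_discrete_cost:
  fixes \<Omega> :: "'a::euclidean_space set"
  assumes "bounded \<Omega>" and \<gamma>: "\<gamma> \<in> couplings \<Omega> \<mu> \<nu>" and "finite I"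
    and A: "\<And>i. i \<in> I \<Longrightarrow> A i \<in> sets (restrict_space borel \<Omega>)"
    and disj: "disjoint_family_on A I" and cover: "(\<Union>i\<in>I. A i) = \<Omega>"
    and cells: "\<And>i j. i \<in> I \<Longrightarrow> j \<in> I \<Longrightarrow> measure \<gamma> (A i \<times> A j) = \<pi> (i, j)"
    and close: "\<And>i x. i \<in> I \<Longrightarrow> x \<in> A i \<Longrightarrow> dist x (a i) \<le> \<eta>"
  shows "(\<integral>p. norm (fst p - snd p) \<partial>\<gamma>) \<le> transport_cost (\<lambda>(i, j). dist (a i) (a j)) I \<pi> + 2 * \<eta>"
proof -
  interpret \<gamma>: prob_space \<gamma> using \<gamma> by (simp add: couplings_def borel_prob_on_def)
  let ?C = "\<lambda>ij. A (fst ij) \<times> A (snd ij)"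
  have C: "?C ij \<in> sets \<gamma>" if "ij \<in> I \<times> I" for ij
    using \<gamma> A that by (auto simp: couplings_def borel_prob_on_def simp flip: sets_pair_restrict_space_borel)
  have C_disj: "disjoint_family_on ?C (I \<times> I)"
    using disj by (auto simp: disjoint_family_on_def)
  have C_cover: "(\<Union>ij\<in>I \<times> I. ?C ij) = space \<gamma>"
    using \<gamma> cover by (auto simp: couplings_def borel_prob_on_def)
  have "(\<integral>p. norm (fst p - snd p) \<partial>\<gamma>)
      \<le> (\<Sum>ij\<in>I \<times> I. measure \<gamma> (?C ij) * (dist (a (fst ij)) (a (snd ij)) + 2 * \<eta>))"
  proof (rule integral_le_partition_sum[OF \<gamma>.finite_measure_axioms _ C C_disj C_cover])
    show "integrable \<gamma> (\<lambda>p. norm (fst p - snd p))" by (rule integrable_coupling_cost[OF \<open>bounded \<Omega>\<close> \<gamma>])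
    fix ij p assume "ij \<in> I \<times> I" "p \<in> ?C ij"
    then have "dist (fst p) (a (fst ij)) \<le> \<eta>" "dist (snd p) (a (snd ij)) \<le> \<eta>"
      by (auto intro: close)
    then show "norm (fst p - snd p) \<le> dist (a (fst ij)) (a (snd ij)) + 2 * \<eta>"
      using dist_triangle[of "fst p" "snd p" "a (fst ij)"] dist_triangle[of "a (fst ij)" "snd p" "a (snd ij)"]
        dist_commute[of "snd p" "a (snd ij)"] by (simp add: dist_norm)
  qed (use \<open>finite I\<close> in simp)
  also have "\<dots> = (\<Sum>ij\<in>I \<times> I. \<pi> ij * (dist (a (fst ij)) (a (snd ij)) + 2 * \<eta>))"
    using cells by (intro sum.cong) auto
  also have "\<dots> = transport_cost (\<lambda>(i, j). dist (a i) (a j)) I \<pi> + 2 * \<eta> * (\<Sum>ij\<in>I \<times> I. \<pi> ij)"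
    by (simp add: transport_cost_def distrib_left sum.distrib sum_distrib_left mult_ac split_beta)
  also have "(\<Sum>ij\<in>I \<times> I. \<pi> ij) = (\<Sum>ij\<in>I \<times> I. measure \<gamma> (?C ij))"
    using cells by (intro sum.cong) auto
  also have "\<dots> = 1"
    by (rule prob_space_partition_sum[OF \<gamma>.prob_space_axioms _ C C_disj C_cover]) (use \<open>finite I\<close> in simp)
  finally show ?thesis by simp
qed

lemma coupling_cost_le_dual_value:
  fixes \<Omega> :: "'a::euclidean_space set"
  assumes "bounded \<Omega>" and \<mu>: "borel_prob_on \<Omega> \<mu>" and \<nu>: "borel_prob_on \<Omega> \<nu>" and "0 < \<epsilon>"
  obtains \<gamma> \<phi> where "\<gamma> \<in> couplings \<Omega> \<mu> \<nu>" and "\<phi> \<in> Cb \<Omega>" and "1-lipschitz_on UNIV \<phi>"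
    and "(\<integral>p. norm (fst p - snd p) \<partial>\<gamma>) \<le> (\<integral>x. \<phi> x \<partial>\<mu>) - (\<integral>x. \<phi> x \<partial>\<nu>) + \<epsilon>"
proof -
  \<comment> \<open>The cell diameters cost 2 eta in the transport cost and eta in each integral.\<close>
  define \<eta> where "\<eta> = \<epsilon> / 4"
  have "0 < \<eta>" using \<open>0 < \<epsilon>\<close> by (simp add: \<eta>_def)
  obtain I :: "('a \<Rightarrow> int) set" and A where "finite I" and disj: "disjoint_family_on A I"
    and cover: "(\<Union>i\<in>I. A i) = \<Omega>" and nonempty: "\<And>i. i \<in> I \<Longrightarrow> A i \<noteq> {}"
    and A: "\<And>i. A i \<in> sets (restrict_space borel \<Omega>)"
    and small: "\<And>i x y. x \<in> A i \<Longrightarrow> y \<in> A i \<Longrightarrow> dist x y < \<eta>"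
    using bounded_partition_small_cells[OF \<open>bounded \<Omega>\<close> \<open>0 < \<eta>\<close>] by blast
  define a where "a i = (SOME x. x \<in> A i)" for i
  have close: "dist x (a i) \<le> \<eta>" if "i \<in> I" "x \<in> A i" for i x
    using small[OF that(2) someI_ex[of "\<lambda>x. x \<in> A i"]] nonempty[OF that(1)] by (force simp: a_def)
  have total: "(\<Sum>i\<in>I. measure M (A i)) = 1" if "borel_prob_on \<Omega> M" for M
    using that A \<open>finite I\<close> disj cover
    by (intro prob_space_partition_sum) (auto simp: borel_prob_on_def)
  obtain \<pi> \<phi> where plan: "transport_plan I (\<lambda>i. measure \<mu> (A i)) (\<lambda>i. measure \<nu> (A i)) \<pi>"
    and "1-lipschitz_on UNIV \<phi>"
    and dual: "transport_cost (\<lambda>(i, j). dist (a i) (a j)) I \<pi>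
      = (\<Sum>i\<in>I. measure \<mu> (A i) * \<phi> (a i)) - (\<Sum>j\<in>I. measure \<nu> (A j) * \<phi> (a j))"
    using finite_kantorovich_duality[OF \<open>finite I\<close> _ _ total[OF \<mu>] total[OF \<nu>]] by auto
  obtain \<gamma> where \<gamma>: "\<gamma> \<in> couplings \<Omega> \<mu> \<nu>"
    and cells: "\<And>i j. i \<in> I \<Longrightarrow> j \<in> I \<Longrightarrow> measure \<gamma> (A i \<times> A j) = \<pi> (i, j)"
    using transport_plan_coupling[OF \<mu> \<nu> \<open>finite I\<close> A disj cover plan] by blast
  have cost: "(\<integral>p. norm (fst p - snd p) \<partial>\<gamma>) \<le> transport_cost (\<lambda>(i, j). dist (a i) (a j)) I \<pi> + 2 * \<eta>"
    using coupling_cost_le_discrete_cost[OF \<open>bounded \<Omega>\<close> \<gamma> \<open>finite I\<close> A disj cover cells close] .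
  have "\<phi> \<in> Cb \<Omega>" using \<open>1-lipschitz_on UNIV \<phi>\<close> \<open>bounded \<Omega>\<close>
    by (auto intro: lipschitz_on_Cb lipschitz_on_subset)
  have approx: "\<bar>(\<integral>x. \<phi> x \<partial>M) - (\<Sum>i\<in>I. measure M (A i) * \<phi> (a i))\<bar> \<le> \<eta>"
    if "borel_prob_on \<Omega> M" for M
    using that A \<open>finite I\<close> disj cover \<open>1-lipschitz_on UNIV \<phi>\<close> close
      integrable_Cb[OF that \<open>\<phi> \<in> Cb \<Omega>\<close>]
    by (intro integral_lipschitz_partition_approx) (auto simp: borel_prob_on_def)
  have "(\<integral>p. norm (fst p - snd p) \<partial>\<gamma>) \<le> (\<integral>x. \<phi> x \<partial>\<mu>) - (\<integral>x. \<phi> x \<partial>\<nu>) + \<epsilon>"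
    using cost dual approx[OF \<mu>] approx[OF \<nu>] unfolding abs_le_iff \<eta>_def by linarith
  then show thesis using that \<gamma> \<open>\<phi> \<in> Cb \<Omega>\<close> \<open>1-lipschitz_on UNIV \<phi>\<close> by blast
qed


lemma cSup_eq_cInf_if_approximable:
  fixes S T :: "real set"
  assumes le: "\<And>s t. s \<in> S \<Longrightarrow> t \<in> T \<Longrightarrow> s \<le> t"
    and approx: "\<And>e. 0 < e \<Longrightarrow> \<exists>s\<in>S. \<exists>t\<in>T. t \<le> s + e"
  shows "Sup S = Inf T"
proof -
  obtain s\<^sub>0 t\<^sub>0 where "s\<^sub>0 \<in> S" "t\<^sub>0 \<in> T" using approx[of 1] by auto
  then have "S \<noteq> {}" "T \<noteq> {}" "bdd_above S" "bdd_below T"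
    using le by (auto simp: bdd_above_def bdd_below_def)
  have "Sup S \<le> Inf T"
    using \<open>S \<noteq> {}\<close> \<open>T \<noteq> {}\<close> le by (intro cSup_least cInf_greatest) auto
  moreover have "Inf T \<le> Sup S"
  proof (rule field_le_epsilon)
    fix e :: real assume "0 < e"
    then obtain s t where "s \<in> S" "t \<in> T" "t \<le> s + e" using approx by blast
    then show "Inf T \<le> Sup S + e"
      using cInf_lower[OF \<open>t \<in> T\<close> \<open>bdd_below T\<close>] cSup_upper[OF \<open>s \<in> S\<close> \<open>bdd_above S\<close>] by linarith
  qed
  ultimately show ?thesis by simp
qed

theorem theorem1:
  fixes \<Omega> :: "'a::euclidean_space set" and \<mu> \<nu> :: "'a measure"
  assumes "open \<Omega>" and "connected \<Omega>" and "\<Omega> \<noteq> {}" and "bounded \<Omega>"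
    and "borel_prob_on \<Omega> \<mu>" and "borel_prob_on \<Omega> \<nu>"
  shows "W1 \<Omega> \<mu> \<nu> = Sup {(\<integral>x. \<phi> x \<partial>\<mu>) - (\<integral>x. \<phi> x \<partial>\<nu>) | \<phi>.
           \<phi> \<in> Cb \<Omega> \<and> (\<forall>x\<in>supp \<mu>. \<forall>y\<in>supp \<nu>. \<phi> x - \<phi> y \<le> norm (x - y))}"
  unfolding W1_def
proof (rule cSup_eq_cInf_if_approximable[symmetric], goal_cases)
  case (1 s t)
  then show ?case using dual_value_le_transport_cost[OF \<open>bounded \<Omega>\<close> assms(5,6)] by blast
next
  case (2 e)
  with coupling_cost_le_dual_value[OF \<open>bounded \<Omega>\<close> assms(5,6)] obtain \<gamma> \<phi>
    where "\<gamma> \<in> couplings \<Omega> \<mu> \<nu>" "\<phi> \<in> Cb \<Omega>" "1-lipschitz_on UNIV \<phi>"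
      and "(\<integral>p. norm (fst p - snd p) \<partial>\<gamma>) \<le> (\<integral>x. \<phi> x \<partial>\<mu>) - (\<integral>x. \<phi> x \<partial>\<nu>) + e" by blast
  moreover have "\<phi> x - \<phi> y \<le> norm (x - y)" for x y
    using \<open>1-lipschitz_on UNIV \<phi>\<close> by (simp add: lipschitz_on_one_iff_diff_le dist_norm)
  ultimately show ?case by blast
qed

end
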